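(* Let $u_1,\ldots,u_N\ge 2$ be positive integers, and suppose there is an index set $\Gamma\subset\{1,\ldots,N-1\}$ such that $\prod_{k\in\Gamma}u_k=u_N\cdot\prod_{k\in\Gamma^c}u_k$, where $\Gamma^c=\{1,\ldots,N-1\}\setminus\Gamma$. Set $u_{\max}:=\max\{u_1,\ldots,u_{N-1}\}$. Let ${\bm x}=(x(0),\ldots,x(N-1))\in\mathbb{C}^N$ be the vector with $x(0)=u_{\max}^{N-1}$ whose $Z$-transform is $$X(z):=\sum_{k=0}^{N-1}x(k)z^{-k}=x(0)z^{-(N-1)}(z-\beta_1)\cdots(z-\beta_{N-1}),$$ where $\beta_k=-u_k$ if $k\in\Gamma$ and $\beta_k=-1/u_k$ if $k\in\Gamma^c$. Let ${\bm x}_m\in\mathbb{C}^N$ satisfy $\|{\bm x}_m-{\bm x}\|\le u_{\max}^{-2N}$ (Euclidean norm), and let $X_m(z)=\sum_{k=0}^{N-1}x_m(k)z^{-k}$ be its $Z$-transform. Then for each $k\in\{1,\ldots,N-1\}$: (i) if $1/\beta_k$ is not a zero of $X(z)$, then $|X_m(1/\beta_k)|\ge|X_m(\beta_k)|+c_0$ with $c_0:=1-2u_{\max}^{-N}$; (ii) if $1/\beta_k$ is a zero of $X(z)$, then $\max\{|X_m(\beta_k)|,|X_m(1/\beta_k)|\}\le u_{\max}^{-N}$. *)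

theory Defs
  imports Complex_Main
begin

definition ztrans :: "nat \<Rightarrow> (nat \<Rightarrow> complex) \<Rightarrow> complex \<Rightarrow> complex" where
  "ztrans N x z = (\<Sum>k<N. x k * inverse z ^ k)"

definition vnorm :: "nat \<Rightarrow> (nat \<Rightarrow> complex) \<Rightarrow> real" where
  "vnorm N x = sqrt (\<Sum>k<N. (cmod (x k))\<^sup>2)"

end

theory Submission
  imports Defs
begin

text \<open>
  Write beta_j = -rho_j with rho_j in {u_j, 1/u_j}. The ideal transform X vanishes at every
  beta_k, while X(1/beta_k) = x(0) prod_j (1 - rho_k rho_j). Each product rho_k rho_j is one of
  u_k u_j, 1/(u_k u_j), u_k/u_j, u_j/u_k; by integrality a factor 1 - rho_k rho_j is either 0
  or of modulus at least 1/u_max, so |X(1/beta_k)| >= 1 unless it vanishes. Both beta_k and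
  1/beta_k have reciprocals of modulus at most u_max, so passing from x to x_m changes the
  transform there by at most u_max^N |x_m - x| <= u_max^(-N); the triangle inequality concludes.
\<close>

lemma sum_power_le_power:
  fixes U :: "'a :: linordered_semidom"
  assumes "2 \<le> U"
  shows "(\<Sum>k<n. U ^ k) \<le> U ^ n"
proof (induction n)
  case 0
  then show ?case by simp
next
  case (Suc n)
  have "(\<Sum>k<Suc n. U ^ k) \<le> 2 * U ^ n"
    using Suc.IH by (simp add: mult_2)
  also have "\<dots> \<le> U * U ^ n"
    using assms order_trans[OF zero_le_numeral assms] by (intro mult_right_mono) auto
  finally show ?case by simp
qed

lemma norm_le_vnorm:
  assumes "k < N"
  shows "cmod (x k) \<le> vnorm N x"
proof -
  have "(cmod (x k))\<^sup>2 \<le> (\<Sum>j<N. (cmod (x j))\<^sup>2)"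
    using assms by (intro member_le_sum) auto
  then show ?thesis
    unfolding vnorm_def by (metis norm_ge_zero real_le_rsqrt)
qed

lemma vnorm_nonneg: "0 \<le> vnorm N x"
  unfolding vnorm_def by (simp add: sum_nonneg)

lemma ztrans_diff: "ztrans N y z - ztrans N x z = ztrans N (\<lambda>k. y k - x k) z"
  unfolding ztrans_def by (simp add: sum_subtractf left_diff_distrib)

lemma norm_ztrans_le:
  assumes "2 \<le> U" and "cmod (inverse z) \<le> U"
  shows "cmod (ztrans N x z) \<le> U ^ N * vnorm N x"
proof -
  have "cmod (ztrans N x z) \<le> (\<Sum>k<N. cmod (x k) * cmod (inverse z) ^ k)"
    unfolding ztrans_def by (rule order_trans[OF norm_sum]) (simp add: norm_mult norm_power)
  also have "\<dots> \<le> (\<Sum>k<N. vnorm N x * U ^ k)"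
    using assms norm_le_vnorm[of _ N x] vnorm_nonneg[of N x]
    by (intro sum_mono mult_mono power_mono) auto
  also have "\<dots> \<le> vnorm N x * U ^ N"
    using sum_power_le_power[OF assms(1)] vnorm_nonneg[of N x]
    by (simp add: sum_distrib_left[symmetric] mult_left_mono)
  finally show ?thesis by (simp add: mult.commute)
qed

lemma norm_ztrans_perturbation:
  assumes "2 \<le> U" and "cmod (inverse z) \<le> U"
    and "vnorm N (\<lambda>k. y k - x k) \<le> inverse (U ^ (2 * N))"
  shows "cmod (ztrans N y z - ztrans N x z) \<le> inverse (U ^ N)"
proof -
  have "cmod (ztrans N y z - ztrans N x z) \<le> U ^ N * vnorm N (\<lambda>k. y k - x k)"
    unfolding ztrans_diff by (rule norm_ztrans_le[OF assms(1,2)])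
  also have "\<dots> \<le> U ^ N * inverse (U ^ (2 * N))"
    using assms by (intro mult_left_mono) auto
  also have "\<dots> = inverse (U ^ N)"
    using assms(1) by (simp add: mult_2 power_add)
  finally show ?thesis .
qed

lemma power_card_mult_prod_reciprocal_diff:
  fixes b :: "'a :: field"
  assumes "b \<noteq> 0"
  shows "b ^ card A * (\<Prod>j\<in>A. 1 / b - c j) = (\<Prod>j\<in>A. 1 - b * c j)"
  using assms by (simp add: prod.distrib[symmetric] right_diff_distrib flip: prod_constant)

lemma abs_self_or_reciprocal_le:
  fixes p a U :: real
  assumes "p \<in> {a, 1 / a}" and "1 \<le> a" and "a \<le> U"
  shows "\<bar>p\<bar> \<le> U" and "\<bar>1 / p\<bar> \<le> U"
proof -
  have "1 / a \<le> 1"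
    using assms(2) by simp
  then have "1 / a \<le> U"
    using assms(2,3) by linarith
  then show "\<bar>p\<bar> \<le> U" and "\<bar>1 / p\<bar> \<le> U"
    using assms by auto
qed

lemma abs_one_minus_divide_ge:
  fixes a b :: nat and U :: real
  assumes "a \<noteq> b" and "0 < b" and "real b \<le> U"
  shows "1 / U \<le> \<bar>1 - real a / real b\<bar>"
proof -
  have "1 \<le> \<bar>real b - real a\<bar>"
    using assms(1) by linarith
  then have "1 / real b \<le> \<bar>real b - real a\<bar> / real b"
    by (simp add: divide_right_mono)
  moreover have "1 / U \<le> 1 / real b"
    using assms(2,3) by (simp add: frac_le)
  moreover have "1 - real a / real b = (real b - real a) / real b"
    using assms(2) by (simp add: field_simps)
  ultimately show ?thesis by simp
qed

lemma abs_one_minus_mult_ge: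
  fixes p q U :: real and a b :: nat
  assumes p: "p \<in> {real a, 1 / real a}" and q: "q \<in> {real b, 1 / real b}"
    and "2 \<le> a" "2 \<le> b" "real a \<le> U" "real b \<le> U" and "p * q \<noteq> 1"
  shows "1 / U \<le> \<bar>1 - p * q\<bar>"
proof -
  have "1 / U \<le> 1 / 2"
    using assms by (simp add: frac_le)
  have ab: "4 \<le> real a * real b"
    using assms(3,4) mult_mono[of 2 "real a" 2 "real b"] by simp
  consider "p * q = real (a * b)" | "p * q = 1 / real (a * b)"
    | "p * q = real a / real b" | "p * q = real b / real a"
    using p q by auto
  then show ?thesis
  proof cases
    case 1
    then show ?thesis using ab \<open>1 / U \<le> 1 / 2\<close> by simp
  next
    case 2
    have "1 / (real a * real b) \<le> 1 / 4"
      using ab by (simp add: frac_le)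
    then show ?thesis using 2 \<open>1 / U \<le> 1 / 2\<close> by simp
  next
    case 3
    then show ?thesis using assms abs_one_minus_divide_ge[of a b U] by auto
  next
    case 4
    then show ?thesis using assms abs_one_minus_divide_ge[of b a U] by auto
  qed
qed

lemma prod_one_minus_mult_ge:
  fixes \<rho> :: "nat \<Rightarrow> real" and u :: "nat \<Rightarrow> nat"
  assumes "finite A" and "k \<in> A"
    and bounds: "\<And>j. j \<in> A \<Longrightarrow> \<rho> j \<in> {real (u j), 1 / real (u j)} \<and> 2 \<le> u j \<and> real (u j) \<le> U"
    and nonzero: "(\<Prod>j\<in>A. 1 - \<rho> k * \<rho> j) \<noteq> 0"
  shows "1 \<le> U ^ card A * \<bar>\<Prod>j\<in>A. 1 - \<rho> k * \<rho> j\<bar>"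
proof -
  have "2 \<le> U"
    using bounds[OF \<open>k \<in> A\<close>] by linarith
  have factor_ge: "1 / U \<le> \<bar>1 - \<rho> k * \<rho> j\<bar>" if "j \<in> A" for j
  proof (rule abs_one_minus_mult_ge)
    show "\<rho> k * \<rho> j \<noteq> 1"
      using nonzero \<open>finite A\<close> that by (auto simp: prod_zero_iff)
  qed (use bounds[OF \<open>k \<in> A\<close>] bounds[OF that] in auto)
  have "U ^ card A * (1 / U) ^ card A \<le> U ^ card A * (\<Prod>j\<in>A. \<bar>1 - \<rho> k * \<rho> j\<bar>)"
    using \<open>2 \<le> U\<close> factor_ge prod_mono[of A "\<lambda>_. 1 / U"] by (intro mult_left_mono) auto
  then show ?thesis
    using \<open>2 \<le> U\<close> by (simp add: abs_prod power_one_over)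
qed

lemma product_form_at_root_and_reciprocal:
  fixes \<beta> :: "nat \<Rightarrow> complex" and \<rho> :: "nat \<Rightarrow> real" and u :: "nat \<Rightarrow> nat"
  assumes "finite A" and "k \<in> A"
    and params: "\<And>j. j \<in> A \<Longrightarrow> \<beta> j = - of_real (\<rho> j)
                   \<and> \<rho> j \<in> {real (u j), 1 / real (u j)} \<and> 2 \<le> u j \<and> real (u j) \<le> U"
    and X: "\<And>z. z \<noteq> 0 \<Longrightarrow> X z = of_real (U ^ card A) * inverse z ^ card A * (\<Prod>j\<in>A. z - \<beta> j)"
  shows "X (\<beta> k) = 0" and "X (1 / \<beta> k) \<noteq> 0 \<Longrightarrow> 1 \<le> cmod (X (1 / \<beta> k))"
proof -
  have "\<beta> k \<noteq> 0"
    using params[OF \<open>k \<in> A\<close>] by auto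
  have "(\<Prod>j\<in>A. \<beta> k - \<beta> j) = 0"
    using \<open>finite A\<close> \<open>k \<in> A\<close> by (intro prod_zero) auto
  then show "X (\<beta> k) = 0"
    using X[OF \<open>\<beta> k \<noteq> 0\<close>] by simp
  have "(\<Prod>j\<in>A. 1 - \<beta> k * \<beta> j) = of_real (\<Prod>j\<in>A. 1 - \<rho> k * \<rho> j)"
    using params \<open>k \<in> A\<close> by (simp cong: prod.cong)
  then have reciprocal: "X (1 / \<beta> k) = of_real (U ^ card A * (\<Prod>j\<in>A. 1 - \<rho> k * \<rho> j))"
    using X[of "1 / \<beta> k"] \<open>\<beta> k \<noteq> 0\<close> power_card_mult_prod_reciprocal_diff[of "\<beta> k" A \<beta>]
    by simp
  assume "X (1 / \<beta> k) \<noteq> 0"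
  then have "(\<Prod>j\<in>A. 1 - \<rho> k * \<rho> j) \<noteq> 0"
    unfolding reciprocal by (metis mult_zero_right of_real_0)
  then have "1 \<le> U ^ card A * \<bar>\<Prod>j\<in>A. 1 - \<rho> k * \<rho> j\<bar>"
    using prod_one_minus_mult_ge[of A k \<rho> u U] assms(1,2) params by blast
  also have "\<dots> = cmod (X (1 / \<beta> k))"
    using params[OF \<open>k \<in> A\<close>] unfolding reciprocal norm_of_real by (simp add: abs_mult)
  finally show "1 \<le> cmod (X (1 / \<beta> k))" .
qed

theorem lemma3p1:
  fixes N :: nat and u :: "nat \<Rightarrow> nat" and \<Gamma> :: "nat set"
    and \<beta> :: "nat \<Rightarrow> complex" and x xm :: "nat \<Rightarrow> complex" and umax :: real
  assumes u_ge: "\<And>k. k \<in> {1..N} \<Longrightarrow> u k \<ge> 2"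
    and \<Gamma>_sub: "\<Gamma> \<subseteq> {1..N-1}"
    and prod_eq: "(\<Prod>k\<in>\<Gamma>. u k) = u N * (\<Prod>k\<in>{1..N-1} - \<Gamma>. u k)"
    and umax_def: "umax = real (Max (u ` {1..N-1}))"
    and \<beta>_def: "\<And>k. \<beta> k = (if k \<in> \<Gamma> then - of_nat (u k) else - 1 / of_nat (u k))"
    and x0: "x 0 = of_real (umax ^ (N - 1))"
    and xZ: "\<And>z. z \<noteq> 0 \<Longrightarrow>
              ztrans N x z = x 0 * inverse z ^ (N - 1) * (\<Prod>j\<in>{1..N-1}. (z - \<beta> j))"
    and xm_close: "vnorm N (\<lambda>k. xm k - x k) \<le> inverse (umax ^ (2 * N))"
  shows "\<forall>k\<in>{1..N-1}.
           (ztrans N x (1 / \<beta> k) \<noteq> 0 \<longrightarrow>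
              cmod (ztrans N xm (1 / \<beta> k)) \<ge> cmod (ztrans N xm (\<beta> k)) + (1 - 2 * inverse (umax ^ N)))
         \<and> (ztrans N x (1 / \<beta> k) = 0 \<longrightarrow>
              max (cmod (ztrans N xm (\<beta> k))) (cmod (ztrans N xm (1 / \<beta> k))) \<le> inverse (umax ^ N))"
proof
  fix k assume k: "k \<in> {1..N-1}"
  define \<rho> where "\<rho> j = (if j \<in> \<Gamma> then real (u j) else 1 / real (u j))" for j
  have params: "\<beta> j = - of_real (\<rho> j) \<and> \<rho> j \<in> {real (u j), 1 / real (u j)}
      \<and> 2 \<le> u j \<and> real (u j) \<le> umax" if "j \<in> {1..N-1}" for j
    using u_ge[of j] that unfolding \<beta>_def \<rho>_def umax_def by (auto intro: Max_ge)
  have "2 \<le> umax"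
    using params[OF k] by linarith
  have X: "ztrans N x z = of_real (umax ^ card {1..N-1}) * inverse z ^ card {1..N-1}
      * (\<Prod>j\<in>{1..N-1}. z - \<beta> j)" if "z \<noteq> 0" for z
    using xZ[OF that] by (simp add: x0)
  note X_values = product_form_at_root_and_reciprocal[of "{1..N-1}" k \<beta> \<rho> u umax, OF _ k params X]
  have "\<bar>\<rho> k\<bar> \<le> umax" and "\<bar>1 / \<rho> k\<bar> \<le> umax"
    using params[OF k] by (intro abs_self_or_reciprocal_le[of _ "real (u k)"]; auto)+
  moreover have "cmod (inverse (\<beta> k)) = \<bar>1 / \<rho> k\<bar>" and "cmod (inverse (1 / \<beta> k)) = \<bar>\<rho> k\<bar>"
    using params[OF k] by (simp_all add: inverse_eq_divide norm_divide)
  ultimately have "cmod (inverse w) \<le> umax" if "w \<in> {\<beta> k, 1 / \<beta> k}" for w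
    using that by auto
  then have "cmod (ztrans N xm w - ztrans N x w) \<le> inverse (umax ^ N)"
    if "w \<in> {\<beta> k, 1 / \<beta> k}" for w
    using norm_ztrans_perturbation[OF \<open>2 \<le> umax\<close> _ xm_close] that by blast
  from this[of "\<beta> k"] this[of "1 / \<beta> k"] X_values
  show "(ztrans N x (1 / \<beta> k) \<noteq> 0 \<longrightarrow>
      cmod (ztrans N xm (1 / \<beta> k)) \<ge> cmod (ztrans N xm (\<beta> k)) + (1 - 2 * inverse (umax ^ N)))
    \<and> (ztrans N x (1 / \<beta> k) = 0 \<longrightarrow>
      max (cmod (ztrans N xm (\<beta> k))) (cmod (ztrans N xm (1 / \<beta> k))) \<le> inverse (umax ^ N))"
    using norm_triangle_ineq2[of "ztrans N x (1 / \<beta> k)" "ztrans N xm (1 / \<beta> k)"]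
    by (auto simp: norm_minus_commute)
qed

end
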